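(* Let $k$ be a positive integer, $S=\{3k,3k+1,6k-1\}$ and $G=\langle S\rangle$. For $i\in\mathbb{N}$ let $A_{i,k}=[(2i)3k-i,\,(2i)3k+2i]$ and $B_{i,k}=[(2i+1)3k-i,\,(2i+1)3k+2i+1]$, and let $H_{1,k}=\bigcup_{i\in\mathbb{N}}(A_{i,k}\cup B_{i,k})$. Then: (1) $H_{1,k}$ is a submonoid of $(\mathbb{N},+,0)$ containing $S$; (2) $A_{i,k}<B_{i,k}$ for every $i\in[0,k-1]$; (3) $B_{i,k}<A_{i+1,k}$ for every $i\in[0,k-1]$; (4) $[(2(k-1)+1)3k-(k-1),\infty[\ \subseteq H_{1,k}$; (5) $G=H_{1,k}$; (6) $H_{1,k}$ is a $3$-permutation numerical semigroup.
   Context: $\mathbb{N}=\{0,1,2,\dots\}$. A numerical semigroup is a submonoid $G$ of $(\mathbb{N},+,0)$ with $\mathbb{N}\setminus G$ finite; $\langle S\rangle$ is the submonoid generated by $S$. Writing the elements of a numerical semigroup $G$ as $0=g_0<g_1<g_2<\cdots$, $G$ is an $n$-permutation numerical semigroup if $G=\langle\{g_1,\dots,g_n\}\rangle$ and for every $k\in\mathbb{N}$ the tuple $(g_{kn+1}\bmod n,\dots,g_{kn+n}\bmod n)$ contains exactly one representative of each residue class mod $n$. Notation: $[a,b]=\{x\in\mathbb{N}:a\le x\le b\}$, $[a,\infty[=\{x\in\mathbb{N}:x\ge a\}$. For nonempty $A,B\subseteq\mathbb{N}$, $A<B$ means $x<y$ for all $x\in A$, $y\in B$. *)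

theory Defs
  imports Main "HOL-Library.Infinite_Set"
begin

definition submonoid_nat :: "nat set \<Rightarrow> bool" where
  "submonoid_nat M \<longleftrightarrow> 0 \<in> M \<and> (\<forall>x\<in>M. \<forall>y\<in>M. x + y \<in> M)"

definition gen :: "nat set \<Rightarrow> nat set" where
  "gen S = \<Inter> {M. submonoid_nat M \<and> S \<subseteq> M}"

definition numerical_semigroup :: "nat set \<Rightarrow> bool" where
  "numerical_semigroup G \<longleftrightarrow> submonoid_nat G \<and> finite (UNIV - G)"

text \<open>g_i = enumerate G i, the i-th element of G in increasing order (g_0 = 0).\<close>
definition perm_ns :: "nat \<Rightarrow> nat set \<Rightarrow> bool" where
  "perm_ns n G \<longleftrightarrow> numerical_semigroup G \<and>
     G = gen (enumerate G ` {1..n}) \<and>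
     (\<forall>k::nat. bij_betw (\<lambda>j. enumerate G (k * n + j) mod n) {1..n} {0..<n})"

definition set_less :: "nat set \<Rightarrow> nat set \<Rightarrow> bool" where
  "set_less A B \<longleftrightarrow> A \<noteq> {} \<and> B \<noteq> {} \<and> (\<forall>x\<in>A. \<forall>y\<in>B. x < y)"

definition A_int :: "nat \<Rightarrow> nat \<Rightarrow> nat set" where
  "A_int i k = {(2*i)*(3*k) - i .. (2*i)*(3*k) + 2*i}"

definition B_int :: "nat \<Rightarrow> nat \<Rightarrow> nat set" where
  "B_int i k = {(2*i+1)*(3*k) - i .. (2*i+1)*(3*k) + 2*i + 1}"

definition H1 :: "nat \<Rightarrow> nat set" where
  "H1 k = (\<Union>i. A_int i k \<union> B_int i k)"

end

theory Submission
  imports Defs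
begin

text \<open>Write \<open>I\<^sub>n = [3kn - \<lfloor>n/2\<rfloor>, 3kn + n]\<close>; then \<open>A\<^sub>i = I\<^sub>2\<^sub>i\<close> and \<open>B\<^sub>i = I\<^sub>2\<^sub>i\<^sub>+\<^sub>1\<close>.
  Since \<open>I\<^sub>m + I\<^sub>n \<subseteq> I\<^sub>m\<^sub>+\<^sub>n\<close>, the union is a monoid, and since \<open>I\<^sub>n\<^sub>+\<^sub>2 = I\<^sub>n + I\<^sub>2\<close> with
  \<open>I\<^sub>1, I\<^sub>2\<close> built from \<open>3k, 3k+1, 6k-1\<close>, it is generated by them. The intervals are
  separated for \<open>n < 2k\<close> and overlap or touch afterwards, so the enumeration runs through
  them in order, \<open>I\<^sub>n\<close> starting at index \<open>3i\<^sup>2\<close> or \<open>3i\<^sup>2+3i+1\<close> for \<open>n = 2i\<close> or \<open>2i+1\<close>.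
  Consecutive elements differ by \<open>1\<close> modulo 3 except at the jump from \<open>A\<^sub>i\<close> to \<open>B\<^sub>i\<close>,
  which happens between indices \<open>3i\<^sup>2+3i\<close> and \<open>3i\<^sup>2+3i+1\<close>, i.e. between two blocks of three;
  hence every block of three consecutive elements meets each residue class once.\<close>

lemma enumerate_Suc_eq:
  fixes S :: "nat set"
  assumes "infinite S" "c \<in> S" "enumerate S n < c"
    and "\<And>y. enumerate S n < y \<Longrightarrow> y < c \<Longrightarrow> y \<notin> S"
  shows "enumerate S (Suc n) = c"
  unfolding enumerate_Suc''[OF assms(1)]
  by (rule Least_equality) (use assms in \<open>auto simp: not_less[symmetric]\<close>)

lemma enumerate_add_of_interval:
  fixes S :: "nat set"
  assumes "infinite S" "{enumerate S n..enumerate S n + t} \<subseteq> S"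
  shows "enumerate S (n + t) = enumerate S n + t"
  using assms(2)
proof (induction t)
  case (Suc t)
  have "enumerate S (n + t) = enumerate S n + t"
    using Suc.prems by (intro Suc.IH) auto
  then have "enumerate S (Suc (n + t)) = enumerate S n + Suc t"
    by (intro enumerate_Suc_eq[OF assms(1)]) (use Suc.prems in auto)
  then show ?case by simp
qed simp

locale interval_chain =
  fixes lo hi :: "nat \<Rightarrow> nat"
  assumes mono_lo: "mono lo" and strict_mono_hi: "strict_mono hi" and lo_le_hi: "lo n \<le> hi n"
begin

definition chain_union :: "nat set" where
  "chain_union = (\<Union>n. {lo n..hi n})"

text \<open>The position of \<open>lo n\<close> in the enumeration of the union, as long as the
  intervals before it are pairwise separated.\<close>
definition first_index :: "nat \<Rightarrow> nat" where
  "first_index n = (\<Sum>m<n. hi m - lo m + 1)"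

lemma first_index_0 [simp]: "first_index 0 = 0"
  by (simp add: first_index_def)

lemma first_index_Suc [simp]: "first_index (Suc n) = first_index n + (hi n - lo n) + 1"
  by (simp add: first_index_def)

lemma interval_subset_chain_union: "{lo n..hi n} \<subseteq> chain_union"
  by (auto simp: chain_union_def)

lemma infinite_chain_union: "infinite chain_union"
proof -
  have "range hi \<subseteq> chain_union"
    using lo_le_hi by (auto simp: chain_union_def)
  moreover have "infinite (range hi)"
    by (rule range_inj_infinite) (rule strict_mono_imp_inj_on[OF strict_mono_hi])
  ultimately show ?thesis
    by (rule infinite_super)
qed

lemma not_in_chain_union_gap:
  assumes "hi n < y" "y < lo (Suc n)"
  shows "y \<notin> chain_union"
proof
  assume "y \<in> chain_union"
  then obtain m where m: "lo m \<le> y" "y \<le> hi m"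
    by (auto simp: chain_union_def)
  show False
  proof (cases "m \<le> n")
    case True
    then have "hi m \<le> hi n"
      using strict_mono_hi by (simp add: strict_mono_less_eq)
    with m assms show False by simp
  next
    case False
    then have "lo (Suc n) \<le> lo m"
      using mono_lo by (simp add: monoD)
    with m assms show False by simp
  qed
qed

lemma enumerate_first_index:
  assumes separated: "\<And>m. m < N \<Longrightarrow> hi m < lo (Suc m)" and "n \<le> N"
  shows "enumerate chain_union (first_index n) = lo n"
  using assms(2)
proof (induction n)
  case 0
  have "lo 0 \<le> x" if "x \<in> chain_union" for x
    using that mono_lo by (auto simp: chain_union_def intro: order_trans[OF monoD])
  moreover have "lo 0 \<in> chain_union"
    using interval_subset_chain_union[of 0] lo_le_hi[of 0] by auto
  ultimately show ?case
    by (auto simp: enumerate_0 intro: Least_equality)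
next
  case (Suc n)
  have "enumerate chain_union (first_index n + (hi n - lo n)) = hi n"
    using enumerate_add_of_interval[OF infinite_chain_union, of "first_index n" "hi n - lo n"]
      Suc lo_le_hi[of n] interval_subset_chain_union[of n] by simp
  moreover have "hi n < lo (Suc n)"
    using Suc.prems separated by simp
  ultimately have "enumerate chain_union (Suc (first_index n + (hi n - lo n))) = lo (Suc n)"
    using interval_subset_chain_union[of "Suc n"] lo_le_hi[of "Suc n"] not_in_chain_union_gap[of n]
    by (intro enumerate_Suc_eq[OF infinite_chain_union]) auto
  then show ?case by simp
qed

lemma enumerate_first_index_add:
  assumes "\<And>m. m < N \<Longrightarrow> hi m < lo (Suc m)" "n \<le> N" "{lo n..lo n + t} \<subseteq> chain_union"
  shows "enumerate chain_union (first_index n + t) = lo n + t"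
  using enumerate_add_of_interval[OF infinite_chain_union] enumerate_first_index[OF assms(1,2)] assms(3)
  by simp

lemma first_index_cover:
  assumes "p < first_index N"
  shows "\<exists>j<N. first_index j \<le> p \<and> p < first_index (Suc j)"
  using assms
proof (induction N)
  case (Suc N)
  show ?case
  proof (cases "p < first_index N")
    case True
    then show ?thesis using Suc.IH less_SucI by blast
  next
    case False
    then show ?thesis using Suc.prems by (intro exI[of _ N]) simp
  qed
qed simp

lemma atLeast_subset_chain_union:
  assumes adjacent: "\<And>m. M \<le> m \<Longrightarrow> lo (Suc m) \<le> Suc (hi m)"
  shows "{lo M..} \<subseteq> chain_union"
proof -
  have "{lo M..hi (M + d)} \<subseteq> chain_union" for d
  proof (induction d)
    case 0
    show ?case using interval_subset_chain_union by simp
  next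
    case (Suc d)
    have "{hi (M + d)<..hi (M + Suc d)} \<subseteq> {lo (M + Suc d)..hi (M + Suc d)}"
      using adjacent[of "M + d"] by auto
    with Suc.IH interval_subset_chain_union show ?case
      by (auto simp: subset_iff) (meson not_le)
  qed
  moreover have "x \<le> hi (M + x)" for x
    using strict_mono_imp_increasing[OF strict_mono_hi, of "M + x"] by simp
  ultimately show ?thesis
    by (meson atLeastAtMost_iff atLeast_iff subsetD subsetI)
qed

end

lemma bij_betw_mod3_block:
  fixes g :: "nat \<Rightarrow> nat"
  assumes "g (m*3 + 2) mod 3 = Suc (g (m*3 + 1)) mod 3"
    and "g (m*3 + 3) mod 3 = Suc (g (m*3 + 2)) mod 3"
  shows "bij_betw (\<lambda>j. g (m*3 + j) mod 3) {1..3} {0..<3}"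
proof -
  define r where "r = g (m*3 + 1) mod 3"
  have second: "g (m*3 + 2) mod 3 = Suc r mod 3"
    using assms(1) by (simp add: r_def mod_Suc_eq)
  then have third: "g (m*3 + 3) mod 3 = Suc (Suc r) mod 3"
    using assms(2) by (metis mod_Suc_eq)
  note residues = r_def[symmetric] second third
  have "r < 3"
    by (simp add: r_def)
  then have "r = 0 \<or> r = 1 \<or> r = 2"
    by arith
  moreover have "{1..3::nat} = {1, 2, 3}" "{0..<3::nat} = {0, 1, 2}"
    by auto
  ultimately show ?thesis
    using residues by (elim disjE) (auto simp: bij_betw_def inj_on_def numeral_2_eq_2)
qed

definition H1_lo :: "nat \<Rightarrow> nat \<Rightarrow> nat" where
  "H1_lo k n = n*(3*k) - n div 2"

definition H1_hi :: "nat \<Rightarrow> nat \<Rightarrow> nat" where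
  "H1_hi k n = n*(3*k) + n"

lemma A_int_eq: "A_int i k = {H1_lo k (2*i)..H1_hi k (2*i)}"
  by (simp add: A_int_def H1_lo_def H1_hi_def)

lemma B_int_eq: "B_int i k = {H1_lo k (Suc (2*i))..H1_hi k (Suc (2*i))}"
  by (simp add: B_int_def H1_lo_def H1_hi_def)

lemma div2_le_mult_3k: "1 \<le> k \<Longrightarrow> n div 2 \<le> n * (3*k)" for k n :: nat
proof -
  assume "1 \<le> k"
  then have "n \<le> n * (3*k)"
    by simp
  then show ?thesis
    using div_le_dividend[of n 2] by linarith
qed

interpretation H1: interval_chain "H1_lo k" "H1_hi k" for k
proof
  have "H1_lo k n \<le> H1_lo k (Suc n)" for n
  proof (cases "k = 0")
    case False
    have "n div 2 \<le> n * (3*k)"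
      using False by (simp add: div2_le_mult_3k)
    moreover have "Suc n div 2 \<le> Suc (n div 2)"
      by simp
    ultimately show ?thesis
      using False by (simp add: H1_lo_def)
  qed (simp add: H1_lo_def)
  then show "mono (H1_lo k)"
    by (simp add: mono_iff_le_Suc)
  show "strict_mono (H1_hi k)"
    by (simp add: strict_mono_Suc_iff H1_hi_def)
  show "H1_lo k n \<le> H1_hi k n" for n
    by (simp add: H1_lo_def H1_hi_def)
qed

lemma H1_eq_chain_union: "H1 k = H1.chain_union k"
proof -
  have "(\<Union>n. I n) = (\<Union>i. I (2*i) \<union> I (Suc (2*i)))" for I :: "nat \<Rightarrow> nat set"
  proof (intro equalityI subsetI)
    fix x assume "x \<in> (\<Union>n. I n)"
    then obtain n where "x \<in> I n" by blast
    then show "x \<in> (\<Union>i. I (2*i) \<union> I (Suc (2*i)))"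
      by (cases "even n") (auto elim!: evenE oddE)
  qed auto
  from this[of "\<lambda>n. {H1_lo k n..H1_hi k n}"] show ?thesis
    by (simp add: H1_def H1.chain_union_def A_int_eq B_int_eq)
qed

lemma H1_separated: "n < 2*k \<Longrightarrow> H1_hi k n < H1_lo k (Suc n)"
proof -
  assume "n < 2*k"
  moreover have "2 * (Suc n div 2) \<le> Suc n"
    by simp
  ultimately show ?thesis
    by (simp add: H1_lo_def H1_hi_def)
qed

lemma H1_adjacent: "2*k \<le> Suc n \<Longrightarrow> H1_lo k (Suc n) \<le> Suc (H1_hi k n)"
proof -
  assume "2*k \<le> Suc n"
  then have "k \<le> Suc n div 2"
    using div_le_mono[of "2*k" "Suc n" 2] by simp
  with \<open>2*k \<le> Suc n\<close> show ?thesis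
    by (simp add: H1_lo_def H1_hi_def)
qed

lemma H1_hi_minus_lo: "1 \<le> k \<Longrightarrow> H1_hi k n - H1_lo k n = n + n div 2"
  by (simp add: H1_lo_def H1_hi_def div2_le_mult_3k)

lemma H1_first_index:
  assumes "1 \<le> k"
  shows "H1.first_index k (2*i) = 3*(i*i)" and "H1.first_index k (Suc (2*i)) = 3*(i*i) + 3*i + 1"
proof -
  show even_index: "H1.first_index k (2*i) = 3*(i*i)" for i
  proof (induction i)
    case (Suc i)
    have "2 * Suc i = Suc (Suc (2*i))" by simp
    then show ?case
      using Suc by (simp add: H1_hi_minus_lo[OF assms] algebra_simps)
  qed simp
  show "H1.first_index k (Suc (2*i)) = 3*(i*i) + 3*i + 1"
    by (simp add: even_index H1_hi_minus_lo[OF assms])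
qed

lemma set_less_atLeastAtMost:
  fixes a b c d :: nat
  shows "a \<le> b \<Longrightarrow> c \<le> d \<Longrightarrow> b < c \<Longrightarrow> set_less {a..b} {c..d}"
  by (auto simp: set_less_def)

lemma H1_intervals_ordered:
  assumes "i < k"
  shows "set_less (A_int i k) (B_int i k)" and "set_less (B_int i k) (A_int (Suc i) k)"
proof -
  have "2 * Suc i = Suc (Suc (2*i))"
    by simp
  then show "set_less (A_int i k) (B_int i k)" "set_less (B_int i k) (A_int (Suc i) k)"
    unfolding A_int_eq B_int_eq
    by (intro set_less_atLeastAtMost H1.lo_le_hi H1_separated, use assms in simp)+
qed

lemma H1_interval_add:
  assumes "x \<in> {H1_lo k m..H1_hi k m}" "y \<in> {H1_lo k n..H1_hi k n}"
  shows "x + y \<in> {H1_lo k (m + n)..H1_hi k (m + n)}"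
proof -
  have "m div 2 + n div 2 \<le> (m + n) div 2"
    using div_add1_eq[of m n 2] by linarith
  then have "H1_lo k (m + n) \<le> H1_lo k m + H1_lo k n"
    unfolding H1_lo_def add_mult_distrib by arith
  moreover have "H1_hi k (m + n) = H1_hi k m + H1_hi k n"
    by (simp add: H1_hi_def add_mult_distrib)
  ultimately show ?thesis
    using assms by simp
qed

lemma H1_submonoid: "submonoid_nat (H1 k)"
  unfolding submonoid_nat_def H1_eq_chain_union H1.chain_union_def
proof (intro conjI ballI)
  have "0 \<in> {H1_lo k 0..H1_hi k 0}"
    by (simp add: H1_lo_def H1_hi_def)
  then show "0 \<in> (\<Union>n. {H1_lo k n..H1_hi k n})"
    by blast
  fix x y
  assume "x \<in> (\<Union>n. {H1_lo k n..H1_hi k n})" "y \<in> (\<Union>n. {H1_lo k n..H1_hi k n})"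
  then obtain m n where "x \<in> {H1_lo k m..H1_hi k m}" "y \<in> {H1_lo k n..H1_hi k n}"
    by blast
  then have "x + y \<in> {H1_lo k (m + n)..H1_hi k (m + n)}"
    by (rule H1_interval_add)
  then show "x + y \<in> (\<Union>n. {H1_lo k n..H1_hi k n})"
    by blast
qed

lemma generators_subset_H1: "{3*k, 3*k+1, 6*k-1} \<subseteq> H1 k"
proof -
  have "{3*k, 3*k+1} \<subseteq> {H1_lo k 1..H1_hi k 1}" "6*k-1 \<in> {H1_lo k 2..H1_hi k 2}"
    by (auto simp: H1_lo_def H1_hi_def)
  then show ?thesis
    using H1.interval_subset_chain_union unfolding H1_eq_chain_union by blast
qed

lemma submonoid_nat_add:
  "submonoid_nat M \<Longrightarrow> x \<in> M \<Longrightarrow> y \<in> M \<Longrightarrow> x + y \<in> M"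
  by (simp add: submonoid_nat_def)

lemma submonoid_nat_add_intervals:
  fixes a b c d :: nat
  assumes M: "submonoid_nat M" and "a \<le> b" "c \<le> d" "{a..b} \<subseteq> M" "{c..d} \<subseteq> M"
  shows "{a + c..b + d} \<subseteq> M"
proof
  fix z
  assume z: "z \<in> {a + c..b + d}"
  have "\<exists>x\<in>{a..b}. \<exists>y\<in>{c..d}. z = x + y"
  proof (cases "z \<le> b + c")
    case True
    with z have "z - c \<in> {a..b}" "c \<in> {c..d}" "z = (z - c) + c"
      using assms by auto
    then show ?thesis by blast
  next
    case False
    with z have "b \<in> {a..b}" "z - b \<in> {c..d}" "z = b + (z - b)"
      using assms by auto
    then show ?thesis by blast
  qed
  then show "z \<in> M"
    using assms submonoid_nat_add[OF M] by blast
qed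

lemma H1_interval_subset_submonoid:
  assumes k: "1 \<le> k" and M: "submonoid_nat M" and S: "{3*k, 3*k+1, 6*k-1} \<subseteq> M"
  shows "{H1_lo k n..H1_hi k n} \<subseteq> M"
proof (induction n rule: nat_induct2)
  case 0
  show ?case
    using M by (simp add: H1_lo_def H1_hi_def submonoid_nat_def)
next
  case 1
  have "{3*k..3*k+1} \<subseteq> M"
  proof
    fix x
    assume "x \<in> {3*k..3*k+1}"
    then have "x = 3*k \<or> x = 3*k + 1"
      by auto
    with S show "x \<in> M"
      by auto
  qed
  then show ?case
    by (simp add: H1_lo_def H1_hi_def)
next
  case (step n)
  have "{6*k-1..6*k+2} \<subseteq> M"
  proof
    fix x
    assume "x \<in> {6*k-1..6*k+2}"
    then have "x = 6*k-1 \<or> x = 3*k + 3*k \<or> x = 3*k + (3*k+1) \<or> x = (3*k+1) + (3*k+1)"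
      using k by auto
    then show "x \<in> M"
      using S submonoid_nat_add[OF M, of "3*k" "3*k"] submonoid_nat_add[OF M, of "3*k" "3*k+1"]
        submonoid_nat_add[OF M, of "3*k+1" "3*k+1"]
      by (elim disjE) simp_all
  qed
  with step.IH have "{H1_lo k n + (6*k - 1)..H1_hi k n + (6*k + 2)} \<subseteq> M"
    by (intro submonoid_nat_add_intervals[OF M] H1.lo_le_hi) simp_all
  moreover have "H1_lo k (n + 2) = H1_lo k n + (6*k - 1)" "H1_hi k (n + 2) = H1_hi k n + (6*k + 2)"
    using k div2_le_mult_3k[OF k, of n] by (simp_all add: H1_lo_def H1_hi_def algebra_simps)
  ultimately show ?case
    by simp
qed

lemma gen_generators_eq_H1:
  assumes "1 \<le> k"
  shows "gen {3*k, 3*k+1, 6*k-1} = H1 k"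
proof
  show "gen {3*k, 3*k+1, 6*k-1} \<subseteq> H1 k"
    unfolding gen_def using H1_submonoid generators_subset_H1 by blast
  show "H1 k \<subseteq> gen {3*k, 3*k+1, 6*k-1}"
    unfolding gen_def H1_eq_chain_union H1.chain_union_def
    using H1_interval_subset_submonoid[OF assms] by blast
qed

lemma atLeast_subset_H1: "1 \<le> k \<Longrightarrow> {H1_lo k (2*k - 1)..} \<subseteq> H1 k"
  unfolding H1_eq_chain_union by (rule H1.atLeast_subset_chain_union) (simp add: H1_adjacent)

lemma numerical_semigroup_H1:
  assumes "1 \<le> k"
  shows "numerical_semigroup (H1 k)"
proof -
  have "UNIV - H1 k \<subseteq> {..<H1_lo k (2*k - 1)}"
    using atLeast_subset_H1[OF assms] by (auto simp: not_less)
  then show ?thesis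
    unfolding numerical_semigroup_def using H1_submonoid finite_subset by blast
qed

lemma enumerate_H1:
  assumes "1 \<le> k" "n \<le> 2*k" "t \<le> n + n div 2"
  shows "enumerate (H1 k) (H1.first_index k n + t) = H1_lo k n + t"
  unfolding H1_eq_chain_union
proof (rule H1.enumerate_first_index_add)
  show "H1_hi k m < H1_lo k (Suc m)" if "m < 2*k" for m
    using that by (rule H1_separated)
  show "n \<le> 2*k"
    by (rule assms(2))
  have "H1_lo k n + t \<le> H1_hi k n"
    using H1_hi_minus_lo[OF assms(1), of n] H1.lo_le_hi[of k n] assms(3) by linarith
  then have "{H1_lo k n..H1_lo k n + t} \<subseteq> {H1_lo k n..H1_hi k n}"
    by simp
  then show "{H1_lo k n..H1_lo k n + t} \<subseteq> H1.chain_union k"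
    using H1.interval_subset_chain_union by (rule subset_trans)
qed

lemma enumerate_H1_tail:
  assumes "1 \<le> k"
  shows "enumerate (H1 k) (H1.first_index k (2*k) + t) = H1_lo k (2*k) + t"
  unfolding H1_eq_chain_union
proof (rule H1.enumerate_first_index_add)
  show "H1_hi k m < H1_lo k (Suc m)" if "m < 2*k" for m
    using that by (rule H1_separated)
  show "2*k \<le> 2*k"
    by (rule order_refl)
  have "H1_lo k (2*k - 1) \<le> H1_lo k (2*k)"
    using H1.mono_lo by (simp add: monoD)
  then show "{H1_lo k (2*k)..H1_lo k (2*k) + t} \<subseteq> H1.chain_union k"
    using atLeast_subset_H1[OF assms] unfolding H1_eq_chain_union by auto
qed

lemma H1_jump_mod3:
  assumes "Suc (2*i) < 2*k"
  shows "H1_lo k (Suc (Suc (2*i))) mod 3 = Suc (H1_hi k (Suc (2*i))) mod 3"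
proof -
  obtain c where k: "k = Suc (i + c)"
    using assms less_imp_Suc_add by fastforce
  have "Suc (Suc (2*i)) * (3*k) = Suc (H1_hi k (Suc (2*i))) + 3*c + Suc i"
    by (simp add: H1_hi_def k algebra_simps)
  then have "H1_lo k (Suc (Suc (2*i))) = Suc (H1_hi k (Suc (2*i))) + 3*c"
    by (simp add: H1_lo_def)
  then show ?thesis
    by simp
qed

lemma H1_index_before_B_mod3:
  assumes "1 \<le> k" "Suc p = H1.first_index k (Suc (2*i))"
  shows "p mod 3 = 0"
proof -
  have "p = 3*(i*i + i)"
    using assms H1_first_index(2)[OF assms(1), of i] by simp
  then show ?thesis
    by simp
qed

lemma enumerate_H1_Suc_mod3:
  assumes k: "1 \<le> k" and p: "p mod 3 \<noteq> 0"
  shows "enumerate (H1 k) (Suc p) mod 3 = Suc (enumerate (H1 k) p) mod 3"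
proof (cases "p < H1.first_index k (2*k)")
  case False
  then have "H1.first_index k (2*k) \<le> p"
    by simp
  then obtain t where "p = H1.first_index k (2*k) + t"
    using le_Suc_ex by blast
  then show ?thesis
    using enumerate_H1_tail[OF k, of t] enumerate_H1_tail[OF k, of "Suc t"] by simp
next
  case True
  then obtain j where j: "j < 2*k" "H1.first_index k j \<le> p" "p < H1.first_index k (Suc j)"
    using H1.first_index_cover by blast
  then obtain t where t: "p = H1.first_index k j + t"
    using le_Suc_ex by blast
  have next_index: "H1.first_index k (Suc j) = H1.first_index k j + (j + j div 2) + 1"
    using H1_hi_minus_lo[OF k] by simp
  show ?thesis
  proof (cases "Suc p < H1.first_index k (Suc j)")
    case True
    then show ?thesis
      using enumerate_H1[OF k, of j t] enumerate_H1[OF k, of j "Suc t"] t next_index j(1) by simp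
  next
    case False
    then have last: "t = j + j div 2" and next_p: "Suc p = H1.first_index k (Suc j)"
      using t j(3) next_index by auto
    have "enumerate (H1 k) p = H1_hi k j"
      using enumerate_H1[OF k, of j t] t last j(1) H1_hi_minus_lo[OF k, of j] H1.lo_le_hi[of k j]
      by simp
    moreover have "enumerate (H1 k) (Suc p) = H1_lo k (Suc j)"
      using enumerate_H1[OF k, of "Suc j" 0] next_p j(1) by simp
    moreover have "odd j"
      using H1_index_before_B_mod3[OF k] next_p p by (auto elim!: evenE)
    then obtain i where "j = Suc (2*i)"
      by (elim oddE) simp
    ultimately show ?thesis
      using H1_jump_mod3[of i k] j(1) by simp
  qed
qed

lemma enumerate_H1_first_three:
  assumes "1 \<le> k"
  shows "enumerate (H1 k) ` {1..3} = {3*k, 3*k+1, 6*k-1}"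
proof -
  have index: "H1.first_index k 1 + 0 = 1" "H1.first_index k 1 + 1 = 2" "H1.first_index k 2 + 0 = 3"
    using H1_first_index(2)[OF assms, of 0] H1_first_index(1)[OF assms, of 1] by simp_all
  have "enumerate (H1 k) 1 = 3*k" "enumerate (H1 k) 2 = 3*k+1" "enumerate (H1 k) 3 = 6*k-1"
    using enumerate_H1[OF assms, of 1 0, unfolded index] enumerate_H1[OF assms, of 1 1, unfolded index]
      enumerate_H1[OF assms, of 2 0, unfolded index] assms
    by (simp_all add: H1_lo_def)
  moreover have "{1..3::nat} = {1, 2, 3}"
    by auto
  ultimately show ?thesis
    by simp
qed

lemma perm_ns_3_H1:
  assumes "1 \<le> k"
  shows "perm_ns 3 (H1 k)"
  unfolding perm_ns_def
proof (intro conjI allI)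
  show "numerical_semigroup (H1 k)"
    using assms by (rule numerical_semigroup_H1)
  show "H1 k = gen (enumerate (H1 k) ` {1..3})"
    using gen_generators_eq_H1[OF assms] enumerate_H1_first_three[OF assms] by simp
  show "bij_betw (\<lambda>j. enumerate (H1 k) (m*3 + j) mod 3) {1..3} {0..<3}" for m
  proof (rule bij_betw_mod3_block)
    have "m*3 + 2 = Suc (m*3 + 1)" "m*3 + 3 = Suc (m*3 + 2)" "(m*3 + 1) mod 3 \<noteq> 0" "(m*3 + 2) mod 3 \<noteq> 0"
      by presburger+
    then show "enumerate (H1 k) (m*3 + 2) mod 3 = Suc (enumerate (H1 k) (m*3 + 1)) mod 3"
      and "enumerate (H1 k) (m*3 + 3) mod 3 = Suc (enumerate (H1 k) (m*3 + 2)) mod 3"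
      using enumerate_H1_Suc_mod3[OF assms] by metis+
  qed
qed

theorem lemma4p1:
  fixes k :: nat
  assumes "k \<ge> 1"
  defines "S \<equiv> {3*k, 3*k+1, 6*k-1}"
  shows "(submonoid_nat (H1 k) \<and> S \<subseteq> H1 k)
    \<and> (\<forall>i\<in>{0..k-1}. set_less (A_int i k) (B_int i k))
    \<and> (\<forall>i\<in>{0..k-1}. set_less (B_int i k) (A_int (i+1) k))
    \<and> ({(2*(k-1)+1)*(3*k) - (k-1) ..} \<subseteq> H1 k)
    \<and> (gen S = H1 k)
    \<and> perm_ns 3 (H1 k)"
proof (intro conjI ballI)
  show "submonoid_nat (H1 k)"
    by (rule H1_submonoid)
  show "S \<subseteq> H1 k"
    unfolding S_def by (rule generators_subset_H1)
  obtain j where "k = Suc j"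
    using assms(1) by (cases k) auto
  then have "H1_lo k (2*k - 1) = (2*(k-1)+1)*(3*k) - (k-1)"
    by (simp add: H1_lo_def)
  then show "{(2*(k-1)+1)*(3*k) - (k-1)..} \<subseteq> H1 k"
    using atLeast_subset_H1[OF assms(1)] by simp
  show "gen S = H1 k"
    unfolding S_def using assms(1) by (rule gen_generators_eq_H1)
  show "perm_ns 3 (H1 k)"
    using assms(1) by (rule perm_ns_3_H1)
next
  fix i
  assume "i \<in> {0..k-1}"
  with assms(1) show "set_less (A_int i k) (B_int i k)"
    by (intro H1_intervals_ordered(1)) auto
next
  fix i
  assume "i \<in> {0..k-1}"
  with assms(1) show "set_less (B_int i k) (A_int (i+1) k)"
    using H1_intervals_ordered(2)[of i k] by auto
qed

end
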